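(* Every easy pair of words over a finite alphabet can be separated exactly by a 2-state AfA.
   Context: A pair of words $(x,y)$ means two different words over the same finite alphabet $\Sigma$; it is easy if there is $\sigma\in\Sigma$ with $|x|_\sigma\neq|y|_\sigma$, where $|w|_\sigma$ counts occurrences of $\sigma$ in $w$. An $n$-state affine finite automaton (AfA) over $\Sigma$ consists of real $n\times n$ matrices $A_\sigma$ for $\sigma\in\Sigma\cup\{\$\}$ ($\$$ a right end-marker), each of whose columns sums to $1$; an initial vector $v_0\in\mathbb{R}^n$ with entries summing to $1$; and a set $E_a$ of accepting states. On input $w=w_1\cdots w_k$ the final vector is $v_f=A_\$A_{w_k}\cdots A_{w_1}v_0$, and $w$ is accepted with probability $\sum_{j\in E_a}|v_f[j]|\big/\sum_{j=1}^n|v_f[j]|$. A pair is separated exactly if one word is accepted with probability $1$ and the other with probability $0$. *)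

theory Defs
  imports Complex_Main
begin

text \<open>The end-marker is encoded as None,
  a letter s is encoded as Some s.\<close>

definition easy_pair :: "'a set \<Rightarrow> 'a list \<Rightarrow> 'a list \<Rightarrow> bool" where
  "easy_pair Sig x y \<longleftrightarrow> x \<noteq> y \<and> (\<exists>s\<in>Sig. count_list x s \<noteq> count_list y s)"

definition mat_vec :: "nat \<Rightarrow> (nat \<Rightarrow> nat \<Rightarrow> real) \<Rightarrow> (nat \<Rightarrow> real) \<Rightarrow> (nat \<Rightarrow> real)" where
  "mat_vec n M v = (\<lambda>i. \<Sum>j<n. M i j * v j)"

definition is_afa :: "nat \<Rightarrow> 'a set \<Rightarrow> ('a option \<Rightarrow> nat \<Rightarrow> nat \<Rightarrow> real) \<Rightarrow> (nat \<Rightarrow> real) \<Rightarrow> nat set \<Rightarrow> bool" where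
  "is_afa n Sig A v0 E \<longleftrightarrow>
     (\<forall>s \<in> insert None (Some ` Sig). \<forall>j<n. (\<Sum>i<n. A s i j) = 1)
   \<and> (\<Sum>i<n. v0 i) = 1
   \<and> E \<subseteq> {..<n}"

definition afa_final :: "nat \<Rightarrow> ('a option \<Rightarrow> nat \<Rightarrow> nat \<Rightarrow> real) \<Rightarrow> (nat \<Rightarrow> real) \<Rightarrow> 'a list \<Rightarrow> (nat \<Rightarrow> real)" where
  "afa_final n A v0 w = mat_vec n (A None) (foldl (\<lambda>v s. mat_vec n (A (Some s)) v) v0 w)"

definition afa_accept_prob :: "nat \<Rightarrow> ('a option \<Rightarrow> nat \<Rightarrow> nat \<Rightarrow> real) \<Rightarrow> (nat \<Rightarrow> real) \<Rightarrow> nat set \<Rightarrow> 'a list \<Rightarrow> real" where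
  "afa_accept_prob n A v0 E w =
     (let vf = afa_final n A v0 w in (\<Sum>j\<in>E. \<bar>vf j\<bar>) / (\<Sum>j<n. \<bar>vf j\<bar>))"

definition separates_exactly :: "nat \<Rightarrow> ('a option \<Rightarrow> nat \<Rightarrow> nat \<Rightarrow> real) \<Rightarrow> (nat \<Rightarrow> real) \<Rightarrow> nat set \<Rightarrow> 'a list \<Rightarrow> 'a list \<Rightarrow> bool" where
  "separates_exactly n A v0 E x y \<longleftrightarrow>
     (afa_accept_prob n A v0 E x = 1 \<and> afa_accept_prob n A v0 E y = 0)
   \<or> (afa_accept_prob n A v0 E x = 0 \<and> afa_accept_prob n A v0 E y = 1)"

end

theory Submission
  imports Defs
begin

text \<open>On two states every column-affine matrix preserves the line of vectors \<open>(1 - k, k)\<close>,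
  and acts on it by an affine map of \<open>k\<close>. The distinguishing letter \<open>c\<close> translates \<open>k\<close> by one,
  all other letters act trivially, so after reading \<open>w\<close> from \<open>k = 0\<close> the automaton sits at
  \<open>k = |w|\<^sub>c\<close>. The end-marker then applies the affine map sending \<open>|x|\<^sub>c\<close> to \<open>1\<close> and
  \<open>|y|\<^sub>c\<close> to \<open>0\<close>, so the final vectors are \<open>(0, 1)\<close> and \<open>(1, 0)\<close>, which accepting only the
  second state separates exactly.\<close>

definition line_point :: "real \<Rightarrow> nat \<Rightarrow> real" where
  "line_point k i = (if i = 0 then 1 - k else if i = 1 then k else 0)"

definition line_matrix :: "real \<Rightarrow> real \<Rightarrow> nat \<Rightarrow> nat \<Rightarrow> real" where
  "line_matrix p q i j = line_point (if j = 0 then p else q) i"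

lemma sum_lessThan_2: "(\<Sum>j<(2::nat). f j) = f 0 + (f 1 :: real)"
  by (simp add: numeral_2_eq_2)

lemma sum_line_point: "(\<Sum>i<2. line_point k i) = 1"
  by (simp add: sum_lessThan_2 line_point_def)

lemma mat_vec_line_matrix:
  "mat_vec 2 (line_matrix p q) (line_point k) = line_point ((1 - k) * p + k * q)"
  by (rule ext) (simp add: mat_vec_def sum_lessThan_2 line_matrix_def line_point_def algebra_simps)

definition counting_afa :: "'a \<Rightarrow> real \<Rightarrow> real \<Rightarrow> 'a option \<Rightarrow> nat \<Rightarrow> nat \<Rightarrow> real" where
  "counting_afa c p q s =
     (case s of
        None \<Rightarrow> line_matrix p q
      | Some t \<Rightarrow> if t = c then line_matrix 1 2 else line_matrix 0 1)"

lemma is_afa_counting_afa: "is_afa 2 Sig (counting_afa c p q) (line_point 0) {1}"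
  unfolding is_afa_def counting_afa_def line_matrix_def
  by (auto simp: sum_line_point split: option.split)

lemma foldl_counting_afa:
  "foldl (\<lambda>v s. mat_vec 2 (counting_afa c p q (Some s)) v) (line_point k) w
     = line_point (k + real (count_list w c))"
  by (induction w arbitrary: k) (auto simp: counting_afa_def mat_vec_line_matrix algebra_simps)

lemma afa_final_counting_afa:
  "afa_final 2 (counting_afa c p q) (line_point 0) w
     = line_point ((1 - real (count_list w c)) * p + real (count_list w c) * q)"
  by (simp add: afa_final_def foldl_counting_afa) (simp add: counting_afa_def mat_vec_line_matrix)

lemma afa_accept_prob_counting_afa:
  "afa_accept_prob 2 (counting_afa c p q) (line_point 0) {1} w = \<bar>t\<bar> / (\<bar>1 - t\<bar> + \<bar>t\<bar>)"
  if "t = (1 - real (count_list w c)) * p + real (count_list w c) * q"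
  by (simp add: afa_accept_prob_def afa_final_counting_afa that sum_lessThan_2 line_point_def)

lemma affine_interpolation:
  fixes a b u v :: real
  assumes "a \<noteq> b"
  shows "\<exists>p q. (1 - a) * p + a * q = u \<and> (1 - b) * p + b * q = v"
proof -
  define p where "p = (a * v - b * u) / (a - b)"
  define q where "q = ((1 - b) * u - (1 - a) * v) / (a - b)"
  have "a - b \<noteq> 0" using assms by simp
  then have "(1 - a) * p + a * q = u" and "(1 - b) * p + b * q = v"
    unfolding q_def p_def by (simp_all add: divide_simps) (simp_all add: algebra_simps)
  then show ?thesis by blast
qed

theorem mainTheorem8:
  fixes Sig :: "'a set" and x y :: "'a list"
  assumes "finite Sig" and "x \<in> lists Sig" and "y \<in> lists Sig"
    and "easy_pair Sig x y"
  shows "\<exists>A v0 E. is_afa 2 Sig A v0 E \<and> separates_exactly 2 A v0 E x y"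
proof -
  obtain c where "count_list x c \<noteq> count_list y c"
    using assms(4) unfolding easy_pair_def by blast
  then obtain p q where
    x_to_1: "(1 - real (count_list x c)) * p + real (count_list x c) * q = 1" and
    y_to_0: "(1 - real (count_list y c)) * p + real (count_list y c) * q = 0"
    using affine_interpolation[of "real (count_list x c)" "real (count_list y c)" 1 0] by auto
  have "afa_accept_prob 2 (counting_afa c p q) (line_point 0) {1} x = 1"
    using afa_accept_prob_counting_afa[OF x_to_1 [symmetric]] by simp
  moreover have "afa_accept_prob 2 (counting_afa c p q) (line_point 0) {1} y = 0"
    using afa_accept_prob_counting_afa[OF y_to_0 [symmetric]] by simp
  ultimately show ?thesis
    using is_afa_counting_afa[of Sig c p q] unfolding separates_exactly_def by blast
qed

end
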